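(* For the localized tent shears described in the context, the projective process $(\phi_n(x),D_x\phi_nu/|D_x\phi_nu|)$ on $\mathbb T^2\times\mathbb P^1$ is irreducible.
   Context: Let $F_0$ be the $1$-periodic piecewise linear function with $F_0(\frac12\pm\frac18)=0$, $F_0(\frac12)=1$, linear on $[\frac38,\frac12]$ and $[\frac12,\frac58]$, and zero on $[0,1]\setminus[\frac38,\frac58]$; $F_\alpha(x)=F_0(x-\alpha)$; $v_{\alpha,1}(x)=(F_\alpha(x_2),0)$, $v_{\alpha,2}(x)=(0,F_\alpha(x_1))$ on $\mathbb T^2$. Let $(\alpha_n,\beta_n,i_n)_{n\ge1}$ be i.i.d. uniform on $[0,1]\times[0,1]\times\{1,2\}$, $V_n=\beta_nv_{\alpha_n,i_n}$, $\varphi^w$ the time-1 flow of $w$, and $\phi_n=\varphi^{V_n}\circ\cdots\circ\varphi^{V_1}$. $\mathbb P^1$ is the space of lines through the origin in $\mathbb R^2$. A Markov chain on state space $E$ is irreducible if for every $z\in E$ and nonempty open $O\subseteq E$ there is $n$ with $\mathbb P(Z_n\in O\mid Z_0=z)>0$. *)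

theory Defs
  imports "HOL-Probability.Probability"
begin

definition F0 :: "real \<Rightarrow> real" where
  "F0 x = (let y = frac x in
           if 3/8 \<le> y \<and> y \<le> 1/2 then 8 * (y - 3/8)
           else if 1/2 < y \<and> y \<le> 5/8 then 8 * (5/8 - y)
           else 0)"

definition Fa :: "real \<Rightarrow> real \<Rightarrow> real" where
  "Fa \<alpha> x = F0 (x - \<alpha>)"

text \<open>Shear vector fields v_{alpha,i}, lifted to the universal cover R^2 of T^2.\<close>
definition vfield :: "real \<Rightarrow> nat \<Rightarrow> real \<times> real \<Rightarrow> real \<times> real" where
  "vfield \<alpha> i x = (if i = 1 then (Fa \<alpha> (snd x), 0) else (0, Fa \<alpha> (fst x)))"

definition flow1 :: "(real \<times> real \<Rightarrow> real \<times> real) \<Rightarrow> real \<times> real \<Rightarrow> real \<times> real" where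
  "flow1 w x = (THE y. y 0 = x \<and> (\<forall>t. (y has_vector_derivative w (y t)) (at t))) 1"

definition M1 :: "(real \<times> real \<times> nat) measure" where
  "M1 = uniform_measure lborel {0..1} \<Otimes>\<^sub>M
        (uniform_measure lborel {0..1} \<Otimes>\<^sub>M uniform_count_measure {1, 2})"

text \<open>I.i.d. sequence: omega k is the parameter of step k+1.\<close>
definition Mseq :: "(nat \<Rightarrow> real \<times> real \<times> nat) measure" where
  "Mseq = PiM UNIV (\<lambda>_. M1)"

definition Vstep :: "(nat \<Rightarrow> real \<times> real \<times> nat) \<Rightarrow> nat \<Rightarrow> real \<times> real \<Rightarrow> real \<times> real" where
  "Vstep \<omega> k = (case \<omega> k of (\<alpha>, \<beta>, i) \<Rightarrow> (\<lambda>x. \<beta> *\<^sub>R vfield \<alpha> i x))"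

primrec phi :: "nat \<Rightarrow> (nat \<Rightarrow> real \<times> real \<times> nat) \<Rightarrow> real \<times> real \<Rightarrow> real \<times> real" where
  "phi 0 \<omega> = id"
| "phi (Suc n) \<omega> = flow1 (Vstep \<omega> n) \<circ> phi n \<omega>"

text \<open>Open subsets of T^2 x P^1 correspond exactly to open subsets of
  R^2 x (R^2 - {0}) that are saturated: invariant under integer translations in the
  first component and under nonzero rescaling in the second component.\<close>
definition proj_open :: "((real \<times> real) \<times> (real \<times> real)) set \<Rightarrow> bool" where
  "proj_open S \<longleftrightarrow> open S \<and> S \<subseteq> UNIV \<times> (UNIV - {0}) \<and>
     (\<forall>y w (k1::int) (k2::int) (c::real). (y, w) \<in> S \<longrightarrow> c \<noteq> 0 \<longrightarrow>
        ((fst y + of_int k1, snd y + of_int k2), c *\<^sub>R w) \<in> S)"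

definition hit_event :: "nat \<Rightarrow> real \<times> real \<Rightarrow> real \<times> real \<Rightarrow>
    ((real \<times> real) \<times> (real \<times> real)) set \<Rightarrow> (nat \<Rightarrow> real \<times> real \<times> nat) set" where
  "hit_event n x u S = {\<omega> \<in> space Mseq. \<exists>L. (phi n \<omega> has_derivative L) (at x) \<and> (phi n \<omega> x, L u) \<in> S}"

end

theory Submission
  imports Defs
begin

text \<open>
  Away from the kinks of the tent profile every shear is smooth and its derivative is again a
  shear, with slope \<open>\<plusminus>8\<beta>\<close>.  Composing finitely many such regular shears one can move the base
  point to any position modulo \<open>\<int>\<^sup>2\<close> and turn the tangent line to any direction.  Along a regular control sequence the position and the image of the
  tangent vector depend continuously on the parameters, so every parameter sequence in a small box
  around it ends in the prescribed open set too; the box has positive probability.  Measurability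
  of the event is obtained by testing differentiability on a countable dense set.
\<close>

type_synonym shear_param = "real \<times> real \<times> nat"
type_synonym tangent_state = "(real \<times> real) \<times> (real \<times> real)"

lemma frac_between_eventually:
  fixes a b t :: real
  assumes "0 \<le> a" "b \<le> 1" "a < frac t" "frac t < b"
  shows "eventually (\<lambda>s. frac s = frac t + (s - t) \<and> a < frac s \<and> frac s < b) (nhds t)"
proof -
  let ?I = "{of_int \<lfloor>t\<rfloor> + a <..< of_int \<lfloor>t\<rfloor> + b}"
  have "eventually (\<lambda>s. s \<in> ?I) (nhds t)"
    by (rule eventually_nhds_in_open) (use assms in \<open>auto simp: frac_def\<close>)
  then show ?thesis
  proof (rule eventually_mono)
    fix s assume s: "s \<in> ?I"
    then have "\<lfloor>s\<rfloor> = \<lfloor>t\<rfloor>" using assms by (auto simp: floor_eq_iff)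
    then show "frac s = frac t + (s - t) \<and> a < frac s \<and> frac s < b" using s by (auto simp: frac_def)
  qed
qed

lemma F0_eq_max: "F0 x = max 0 (1 - 8 * \<bar>frac x - 1/2\<bar>)"
  unfolding F0_def Let_def by auto

lemma isCont_F0: "isCont F0 t"
proof (cases "t \<in> \<int>")
  case True
  then obtain k where k: "t = of_int k" by (auto elim: Ints_cases)
  have "eventually (\<lambda>s. s \<in> {t - 1/4 <..< t + 1/4}) (nhds t)"
    by (rule eventually_nhds_in_open) auto
  then have "eventually (\<lambda>s. F0 s = 0) (nhds t)"
  proof (rule eventually_mono)
    fix s assume s: "s \<in> {t - 1/4 <..< t + 1/4}"
    show "F0 s = 0"
    proof (cases "s < t")
      case True
      then have "\<lfloor>s\<rfloor> = k - 1" using s k by (auto simp: floor_eq_iff)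
      then show ?thesis using s k by (auto simp: F0_eq_max frac_def)
    next
      case False
      then have "\<lfloor>s\<rfloor> = k" using s k by (auto simp: floor_eq_iff)
      then show ?thesis using s k False by (auto simp: F0_eq_max frac_def)
    qed
  qed
  from isCont_cong[OF this] show ?thesis by simp
next
  case False
  then have "0 < frac t" "frac t < 1"
    using frac_ge_0[of t] frac_lt_1[of t] by (auto simp: less_le)
  with frac_between_eventually[of 0 1 t]
  have "eventually (\<lambda>s. frac s = frac t + (s - t)) (nhds t)"
    by (auto elim: eventually_mono)
  then have "eventually (\<lambda>s. F0 s = max 0 (1 - 8 * \<bar>frac t + (s - t) - 1/2\<bar>)) (nhds t)"
    by (rule eventually_mono) (simp add: F0_eq_max)
  moreover have "isCont (\<lambda>s. max 0 (1 - 8 * \<bar>frac t + (s - t) - 1/2\<bar>)) t"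
    by (intro continuous_intros)
  ultimately show ?thesis by (simp add: isCont_cong)
qed

lemma tendsto_F0 [tendsto_intros]: "(f \<longlongrightarrow> l) F \<Longrightarrow> ((\<lambda>x. F0 (f x)) \<longlongrightarrow> F0 l) F"
  by (rule isCont_tendsto_compose[OF isCont_F0])

lemma continuous_on_F0 [continuous_intros]:
  "continuous_on S f \<Longrightarrow> continuous_on S (\<lambda>x. F0 (f x))"
  unfolding continuous_on_def by (auto intro: tendsto_F0)

definition tent_regular :: "real \<Rightarrow> bool" where
  "tent_regular t \<longleftrightarrow> frac t \<in> {3/8<..<1/2} \<union> {1/2<..<5/8}"

definition tent_slope :: "real \<Rightarrow> real" where
  "tent_slope t = (if frac t < 1/2 then 8 else -8)"

lemma tent_regular_eventually:
  assumes "tent_regular t"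
  shows "eventually (\<lambda>s. tent_regular s \<and> tent_slope s = tent_slope t
            \<and> F0 s - F0 t = tent_slope t * (s - t)) (nhds t)"
proof -
  consider "3/8 < frac t" "frac t < 1/2" | "1/2 < frac t" "frac t < 5/8"
    using assms by (auto simp: tent_regular_def)
  then show ?thesis
  proof cases
    case 1
    with frac_between_eventually[of "3/8" "1/2" t]
    have "eventually (\<lambda>s. frac s = frac t + (s - t) \<and> 3/8 < frac s \<and> frac s < 1/2) (nhds t)"
      by simp
    then show ?thesis
      by (rule eventually_mono) (use 1 in \<open>auto simp: tent_regular_def tent_slope_def F0_def\<close>)
  next
    case 2
    with frac_between_eventually[of "1/2" "5/8" t]
    have "eventually (\<lambda>s. frac s = frac t + (s - t) \<and> 1/2 < frac s \<and> frac s < 5/8) (nhds t)"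
      by simp
    then show ?thesis
      by (rule eventually_mono) (use 2 in \<open>auto simp: tent_regular_def tent_slope_def F0_def\<close>)
  qed
qed

lemma F0_has_real_derivative:
  assumes "tent_regular t"
  shows "(F0 has_real_derivative tent_slope t) (at t)"
proof -
  have "eventually (\<lambda>s. F0 s = F0 t + tent_slope t * (s - t)) (nhds t)"
    by (rule eventually_mono[OF tent_regular_eventually[OF assms]]) auto
  moreover have "((\<lambda>s. F0 t + tent_slope t * (s - t)) has_real_derivative tent_slope t) (at t)"
    by (auto intro!: derivative_eq_intros)
  ultimately show ?thesis using DERIV_cong_ev by fastforce
qed

lemma isCont_tent_slope:
  assumes "tent_regular t" shows "isCont tent_slope t"
proof -
  have "eventually (\<lambda>s. tent_slope s = tent_slope t) (nhds t)"
    by (rule eventually_mono[OF tent_regular_eventually[OF assms]]) auto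
  from isCont_cong[OF this] show ?thesis by simp
qed

lemma tent_at_15_32: "tent_regular (15/32)" "tent_slope (15/32) = 8" "F0 (15/32) = 3/4"
  and tent_at_17_32: "tent_regular (17/32)" "tent_slope (17/32) = -8" "F0 (17/32) = 3/4"
  by (simp_all add: tent_regular_def tent_slope_def F0_def frac_eq)

lemma tent_regular_frac_cong:
  "frac s = frac t \<Longrightarrow> tent_regular s = tent_regular t \<and> tent_slope s = tent_slope t \<and> F0 s = F0 t"
  by (simp add: tent_regular_def tent_slope_def F0_def)

section \<open>Shears as time-one maps\<close>

lemma has_vector_derivative_zero_imp_const:
  "(\<And>t. (Y has_vector_derivative 0) (at t)) \<Longrightarrow> Y t = Y 0"
  using has_derivative_zero_unique[of UNIV Y t 0] by (simp add: has_vector_derivative_def)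

lemma flow1_eq_translation:
  fixes P :: "real \<times> real \<Rightarrow> 'a::real_normed_vector"
  assumes P: "bounded_linear P" and w: "\<And>y. w y = g (P y)" "\<And>y. P (w y) = 0"
  shows "flow1 w z = z + w z"
proof -
  interpret P: bounded_linear P by (fact P)
  let ?Y = "\<lambda>t::real. z + t *\<^sub>R w z"
  have "(THE Y. Y 0 = z \<and> (\<forall>t. (Y has_vector_derivative w (Y t)) (at t))) = ?Y"
  proof (rule the_equality)
    have "w (?Y t) = w z" for t
      using w by (metis P.add P.scaleR scale_zero_right add_0_right)
    then show "?Y 0 = z \<and> (\<forall>t. (?Y has_vector_derivative w (?Y t)) (at t))"
      by (auto intro!: derivative_eq_intros)
  next
    fix Y assume "Y 0 = z \<and> (\<forall>t. (Y has_vector_derivative w (Y t)) (at t))"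
    then have Y0: "Y 0 = z" and Y': "\<And>t. (Y has_vector_derivative w (Y t)) (at t)"
      by auto
    have "((\<lambda>t. P (Y t)) has_vector_derivative 0) (at t)" for t
      using P.has_vector_derivative[OF Y'] w(2) by simp
    then have "P (Y t) = P z" for t
      using has_vector_derivative_zero_imp_const Y0 by metis
    then have "w (Y t) = w z" for t
      using w(1) by metis
    then have "((\<lambda>t. Y t - t *\<^sub>R w z) has_vector_derivative 0) (at t)" for t
      using Y'[of t] by (auto intro!: derivative_eq_intros)
    then have "Y t - t *\<^sub>R w z = z" for t
      using has_vector_derivative_zero_imp_const Y0 by fastforce
    then show "Y = ?Y" by (auto simp: fun_eq_iff algebra_simps)
  qed
  then show ?thesis by (simp add: flow1_def)
qed

definition shear :: "shear_param \<Rightarrow> real \<times> real \<Rightarrow> real \<times> real" where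
  "shear p z = (case p of (\<alpha>, \<beta>, i) \<Rightarrow> z + \<beta> *\<^sub>R vfield \<alpha> i z)"

lemma shear_eq_if:
  "shear p z = (if snd (snd p) = 1
      then (fst z + fst (snd p) * F0 (snd z - fst p), snd z)
      else (fst z, snd z + fst (snd p) * F0 (fst z - fst p)))"
  by (auto simp: shear_def vfield_def Fa_def prod_eq_iff split: prod.split)

lemma flow1_Vstep [simp]: "flow1 (Vstep \<omega> k) = shear (\<omega> k)"
proof
  fix z
  obtain \<alpha> \<beta> i where \<omega>: "\<omega> k = (\<alpha>, \<beta>, i)" by (cases "\<omega> k") auto
  show "flow1 (Vstep \<omega> k) z = shear (\<omega> k) z"
  proof (cases "i = 1")
    case True
    then show ?thesis
      using flow1_eq_translation[OF bounded_linear_snd, of "Vstep \<omega> k" "\<lambda>s. (\<beta> * Fa \<alpha> s, 0)"]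
      by (simp add: \<omega> Vstep_def vfield_def shear_def)
  next
    case False
    then show ?thesis
      using flow1_eq_translation[OF bounded_linear_fst, of "Vstep \<omega> k" "\<lambda>s. (0, \<beta> * Fa \<alpha> s)"]
      by (simp add: \<omega> Vstep_def vfield_def shear_def)
  qed
qed

lemma phi_Suc_shear: "phi (Suc n) \<omega> = shear (\<omega> n) \<circ> phi n \<omega>"
  by simp

lemma continuous_on_shear: "continuous_on UNIV (shear p)"
  unfolding shear_eq_if[abs_def]
  by (cases "snd (snd p) = 1") ((simp, intro continuous_intros)+)

lemma continuous_on_phi: "continuous_on UNIV (phi n \<omega>)"
  by (induction n) (auto simp: phi_Suc_shear intro: continuous_on_compose2[OF continuous_on_shear])

definition shear_regular :: "shear_param \<Rightarrow> real \<times> real \<Rightarrow> bool" where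
  "shear_regular p z \<longleftrightarrow> (case p of (\<alpha>, \<beta>, i) \<Rightarrow>
     tent_regular ((if i = 1 then snd z else fst z) - \<alpha>))"

definition shear_tangent :: "shear_param \<Rightarrow> real \<times> real \<Rightarrow> real \<times> real \<Rightarrow> real \<times> real" where
  "shear_tangent p z v = (case p of (\<alpha>, \<beta>, i) \<Rightarrow>
     if i = 1 then (fst v + \<beta> * tent_slope (snd z - \<alpha>) * snd v, snd v)
     else (fst v, snd v + \<beta> * tent_slope (fst z - \<alpha>) * fst v))"

lemma shear_regular_eq_if:
  "shear_regular p z \<longleftrightarrow> tent_regular ((if snd (snd p) = 1 then snd z else fst z) - fst p)"
  by (auto simp: shear_regular_def split: prod.split)

lemma shear_tangent_eq_if:
  "shear_tangent p z v = (if snd (snd p) = 1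
      then (fst v + fst (snd p) * tent_slope (snd z - fst p) * snd v, snd v)
      else (fst v, snd v + fst (snd p) * tent_slope (fst z - fst p) * fst v))"
  by (auto simp: shear_tangent_def split: prod.split)

lemma has_derivative_shear:
  assumes "shear_regular p z"
  shows "(shear p has_derivative shear_tangent p z) (at z)"
proof -
  obtain \<alpha> \<beta> i where p: "p = (\<alpha>, \<beta>, i)" by (cases p) auto
  have F0': "((\<lambda>y. F0 (c y - \<alpha>)) has_derivative (\<lambda>h. tent_slope (c z - \<alpha>) * c h)) (at z)"
    if "bounded_linear c" "tent_regular (c z - \<alpha>)" for c :: "real \<times> real \<Rightarrow> real"
  proof -
    have "((\<lambda>y. c y - \<alpha>) has_derivative c) (at z)"
      using that(1) by (auto intro!: derivative_eq_intros bounded_linear_imp_has_derivative)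
    from DERIV_compose_FDERIV[OF F0_has_real_derivative[OF that(2)] this] show ?thesis
      by (simp add: mult.commute)
  qed
  show ?thesis
  proof (cases "i = 1")
    case True
    with assms have "tent_regular (snd z - \<alpha>)" by (simp add: p shear_regular_def)
    with F0'[OF bounded_linear_snd] True show ?thesis
      unfolding p shear_eq_if[abs_def] shear_tangent_def
      by (auto intro!: derivative_eq_intros simp: algebra_simps)
  next
    case False
    with assms have "tent_regular (fst z - \<alpha>)" by (simp add: p shear_regular_def)
    with F0'[OF bounded_linear_fst] False show ?thesis
      unfolding p shear_eq_if[abs_def] shear_tangent_def
      by (auto intro!: derivative_eq_intros simp: algebra_simps)
  qed
qed

definition tangent_step :: "shear_param \<Rightarrow> tangent_state \<Rightarrow> tangent_state" where
  "tangent_step p s = (shear p (fst s), shear_tangent p (fst s) (snd s))"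

definition tangent_run :: "shear_param list \<Rightarrow> tangent_state \<Rightarrow> tangent_state" where
  "tangent_run ps s = foldl (\<lambda>s p. tangent_step p s) s ps"

fun steps_regular :: "shear_param list \<Rightarrow> tangent_state \<Rightarrow> bool" where
  "steps_regular [] s \<longleftrightarrow> True"
| "steps_regular (p # ps) s \<longleftrightarrow> shear_regular p (fst s) \<and> steps_regular ps (tangent_step p s)"

lemma tangent_run_Nil [simp]: "tangent_run [] s = s"
  and tangent_run_Cons [simp]: "tangent_run (p # ps) s = tangent_run ps (tangent_step p s)"
  and tangent_run_append: "tangent_run (ps @ qs) s = tangent_run qs (tangent_run ps s)"
  by (simp_all add: tangent_run_def)

lemma steps_regular_append:
  "steps_regular (ps @ qs) s \<longleftrightarrow> steps_regular ps s \<and> steps_regular qs (tangent_run ps s)"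
  by (induction ps arbitrary: s) auto

lemma phi_has_derivative_tangent_run:
  assumes "steps_regular (map \<omega> [0..<n]) (x, u)"
  shows "\<exists>L. (phi n \<omega> has_derivative L) (at x) \<and> (phi n \<omega> x, L u) = tangent_run (map \<omega> [0..<n]) (x, u)"
  using assms
proof (induction n)
  case 0
  show ?case by (auto intro: has_derivative_ident)
next
  case (Suc n)
  then obtain L where L: "(phi n \<omega> has_derivative L) (at x)"
    and run: "(phi n \<omega> x, L u) = tangent_run (map \<omega> [0..<n]) (x, u)"
    by (auto simp: steps_regular_append)
  with Suc.prems have "shear_regular (\<omega> n) (phi n \<omega> x)"
    by (auto simp: steps_regular_append dest: sym)
  then have "(phi (Suc n) \<omega> has_derivative shear_tangent (\<omega> n) (phi n \<omega> x) \<circ> L) (at x)"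
    unfolding phi_Suc_shear by (rule diff_chain_at[OF L has_derivative_shear])
  then show ?case
    by (intro exI[of _ "shear_tangent (\<omega> n) (phi n \<omega> x) \<circ> L"])
      (simp add: tangent_run_append tangent_step_def o_def flip: run)
qed

section \<open>Measurability of the hitting event\<close>

lemma has_derivative_difference_quotient_LIMSEQ:
  fixes g :: "'a::real_normed_vector \<Rightarrow> 'b::real_normed_vector"
  assumes g: "(g has_derivative L) (at x)"
  shows "(\<lambda>m. real (Suc m) *\<^sub>R (g (x + (1 / real (Suc m)) *\<^sub>R j) - g x)) \<longlonglongrightarrow> L j"
proof (cases "j = 0")
  case True
  then show ?thesis using g by (simp add: has_derivative_at linear_simps)
next
  case False
  interpret L: bounded_linear L using g by (simp add: has_derivative_at)
  define h where "h m = (1 / real (Suc m)) *\<^sub>R j" for m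
  have "h \<longlonglongrightarrow> 0"
    unfolding h_def using LIMSEQ_inverse_real_of_nat
    by (auto simp: inverse_eq_divide intro: tendsto_eq_intros)
  then have "filterlim h (at 0) sequentially"
    using False by (intro filterlim_atI) (auto simp: h_def)
  with g have "(\<lambda>m. norm (g (x + h m) - g x - L (h m)) / norm (h m)) \<longlonglongrightarrow> 0"
    unfolding has_derivative_at by (auto intro: filterlim_compose)
  then have "(\<lambda>m. norm j * (norm (g (x + h m) - g x - L (h m)) / norm (h m))) \<longlonglongrightarrow> norm j * 0"
    by (rule tendsto_mult_left)
  moreover have "norm j * (norm (g (x + h m) - g x - L (h m)) / norm (h m))
      = norm (real (Suc m) *\<^sub>R (g (x + h m) - g x) - L j)" for m
  proof -
    have "real (Suc m) *\<^sub>R (g (x + h m) - g x) - L j = real (Suc m) *\<^sub>R (g (x + h m) - g x - L (h m))"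
      by (simp add: h_def L.scaleR algebra_simps)
    then show ?thesis using False by (simp add: h_def)
  qed
  ultimately show ?thesis
    by (simp add: tendsto_norm_zero_iff LIM_zero_iff h_def)
qed

lemma has_derivative_iff_dense:
  fixes g :: "'a::real_normed_vector \<Rightarrow> 'b::real_normed_vector"
  assumes L: "bounded_linear L" and g: "continuous_on UNIV g"
    and D: "\<And>X. open X \<Longrightarrow> X \<noteq> {} \<Longrightarrow> \<exists>d\<in>D. d \<in> X"
  shows "(g has_derivative L) (at x) \<longleftrightarrow>
    (\<forall>k::nat. \<exists>j::nat. \<forall>y\<in>D. norm (y - x) < 1 / real (Suc j) \<longrightarrow>
        norm (g y - g x - L (y - x)) \<le> norm (y - x) / real (Suc k))"
    (is "_ \<longleftrightarrow> (\<forall>k. \<exists>j. ?close k j D)")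
proof
  assume "(g has_derivative L) (at x)"
  then have approx: "\<exists>d>0. \<forall>y. norm (y - x) < d \<longrightarrow> norm (g y - g x - L (y - x)) \<le> e * norm (y - x)"
    if "e > 0" for e
    using that by (simp add: has_derivative_at_alt)
  show "\<forall>k. \<exists>j. ?close k j D"
  proof
    fix k
    obtain d where d: "d > 0"
      "\<And>y. norm (y - x) < d \<Longrightarrow> norm (g y - g x - L (y - x)) \<le> 1 / real (Suc k) * norm (y - x)"
      using approx[of "1 / real (Suc k)"] by auto
    obtain j where "1 / real (Suc j) < d"
      using reals_Archimedean[OF d(1)] by (auto simp: inverse_eq_divide)
    with d show "\<exists>j. ?close k j D" by (intro exI[of _ j]) auto
  qed
next
  assume close: "\<forall>k. \<exists>j. ?close k j D"
  have "?close k j UNIV" if "?close k j D" for k j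
  proof (intro ballI impI, rule ccontr)
    fix y assume "norm (y - x) < 1 / real (Suc j)"
      and "\<not> norm (g y - g x - L (y - x)) \<le> norm (y - x) / real (Suc k)"
    then have "y \<in> {z. norm (z - x) < 1 / real (Suc j)} \<inter>
        {z. norm (z - x) / real (Suc k) < norm (g z - g x - L (z - x))}" by auto
    moreover have "open ({z. norm (z - x) < 1 / real (Suc j)} \<inter>
        {z. norm (z - x) / real (Suc k) < norm (g z - g x - L (z - x))})"
      using g linear_continuous_on[OF L]
      by (intro open_Int open_Collect_less continuous_intros
          continuous_on_compose2[OF linear_continuous_on[OF L]] continuous_on_compose2[OF g]) auto
    ultimately show False using D that by fastforce
  qed
  then have "\<exists>j. ?close k j UNIV" for k using close by blast
  then show "(g has_derivative L) (at x)"
    unfolding has_derivative_at_alt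
  proof (intro conjI L allI impI)
    fix e :: real assume "0 < e"
    then obtain k where k: "1 / real (Suc k) < e"
      using reals_Archimedean by (auto simp: inverse_eq_divide)
    obtain j where "?close k j UNIV" using \<open>\<And>k. \<exists>j. ?close k j UNIV\<close> by blast
    moreover have "norm (y - x) / real (Suc k) \<le> e * norm (y - x)" for y
      using k mult_right_mono[of "1 / real (Suc k)" e "norm (y - x)"] by simp
    ultimately have "\<forall>y. norm (y - x) < 1 / real (Suc j) \<longrightarrow> norm (g y - g x - L (y - x)) \<le> e * norm (y - x)"
      by (meson UNIV_I order_trans)
    then show "\<exists>d>0. \<forall>y. norm (y - x) < d \<longrightarrow> norm (g y - g x - L (y - x)) \<le> e * norm (y - x)"
      by (intro exI[of _ "1 / real (Suc j)"]) auto
  qed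
qed

lemma sets_has_derivative_event:
  fixes f :: "'w \<Rightarrow> 'a::euclidean_space \<Rightarrow> 'b::euclidean_space"
  assumes meas[measurable]: "\<And>y. (\<lambda>\<omega>. f \<omega> y) \<in> borel_measurable M"
    and cont: "\<And>\<omega>. continuous_on UNIV (f \<omega>)"
    and S[measurable]: "S \<in> sets borel"
  shows "{\<omega>\<in>space M. \<exists>L. (f \<omega> has_derivative L) (at x) \<and> (f \<omega> x, L u) \<in> S} \<in> sets M"
proof -
  obtain D :: "'a set" where "countable D" and D: "\<And>X. open X \<Longrightarrow> X \<noteq> {} \<Longrightarrow> \<exists>d\<in>D. d \<in> X"
    using countable_dense_setE by blast
  moreover have "D \<noteq> {}" using D[of UNIV] by auto
  ultimately obtain y :: "nat \<Rightarrow> 'a" where Dy: "D = range y" by (metis range_from_nat_into)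
  \<comment> \<open>the only possible derivative, assembled from difference quotients and measurable in \<open>\<omega>\<close>\<close>
  define Lc where "Lc \<omega> h = (\<Sum>b\<in>Basis. (h \<bullet> b) *\<^sub>R
      lim (\<lambda>m. real (Suc m) *\<^sub>R (f \<omega> (x + (1 / real (Suc m)) *\<^sub>R b) - f \<omega> x)))" for \<omega> h
  have Lc_meas[measurable]: "(\<lambda>\<omega>. Lc \<omega> h) \<in> borel_measurable M" for h
    unfolding Lc_def by measurable
  have Lc_linear: "bounded_linear (Lc \<omega>)" for \<omega>
    unfolding Lc_def by (intro bounded_linear_sum bounded_linear_compose[OF bounded_linear_scaleR_left]
        bounded_linear_inner_left)
  have Lc_unique: "L = Lc \<omega>" if L: "(f \<omega> has_derivative L) (at x)" for \<omega> L
  proof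
    fix h
    interpret bounded_linear L using L by (rule has_derivative_bounded_linear)
    have "L h = L (\<Sum>b\<in>Basis. (h \<bullet> b) *\<^sub>R b)" by (simp add: euclidean_representation)
    also have "\<dots> = (\<Sum>b\<in>Basis. (h \<bullet> b) *\<^sub>R L b)" by (simp add: sum scaleR)
    also have "\<dots> = Lc \<omega> h"
      unfolding Lc_def using has_derivative_difference_quotient_LIMSEQ[OF L, THEN limI]
      by (intro sum.cong) auto
    finally show "L h = Lc \<omega> h" .
  qed
  have "{\<omega>\<in>space M. \<exists>L. (f \<omega> has_derivative L) (at x) \<and> (f \<omega> x, L u) \<in> S} =
    {\<omega>\<in>space M. (\<forall>k::nat. \<exists>j::nat. \<forall>n. norm (y n - x) < 1 / real (Suc j) \<longrightarrow>
        norm (f \<omega> (y n) - f \<omega> x - Lc \<omega> (y n - x)) \<le> norm (y n - x) / real (Suc k))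
      \<and> (f \<omega> x, Lc \<omega> u) \<in> S}"
  proof -
    have "(\<exists>L. (f \<omega> has_derivative L) (at x) \<and> (f \<omega> x, L u) \<in> S) \<longleftrightarrow>
        (f \<omega> has_derivative Lc \<omega>) (at x) \<and> (f \<omega> x, Lc \<omega> u) \<in> S" for \<omega>
      using Lc_unique by blast
    then show ?thesis
      by (simp add: has_derivative_iff_dense[OF Lc_linear cont D] Dy)
  qed
  also have "\<dots> \<in> sets M" by measurable
  finally show ?thesis .
qed

lemma F0_borel_measurable [measurable]: "F0 \<in> borel_measurable borel"
  using continuous_on_F0[OF continuous_on_id] by (rule borel_measurable_continuous_onI)

lemma phi_measurable: "(\<lambda>\<omega>. phi n \<omega> y) \<in> borel_measurable Mseq"
proof (induction n)
  case 0
  show ?case by simp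
next
  case (Suc n)
  have [measurable]: "(\<lambda>\<omega>. fst (\<omega> n)) \<in> borel_measurable Mseq"
    "(\<lambda>\<omega>. fst (snd (\<omega> n))) \<in> borel_measurable Mseq"
    unfolding Mseq_def M1_def by measurable
  have "{\<omega>\<in>space Mseq. snd (snd (\<omega> n)) = 1} \<in> sets Mseq"
    unfolding Mseq_def M1_def by measurable
  \<comment> \<open>\<open>measurable\<close> splits pairs only in pair measures, hence \<open>borel_prod\<close>\<close>
  note [measurable] = this[folded pred_def] Suc[unfolded borel_prod[symmetric]]
  show ?case unfolding phi_Suc_shear o_def shear_eq_if borel_prod[symmetric] by measurable
qed

lemma sets_hit_event: "open S \<Longrightarrow> hit_event n x u S \<in> sets Mseq"
  unfolding hit_event_def
  by (rule sets_has_derivative_event[OF phi_measurable continuous_on_phi]) simp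

section \<open>Robustness under perturbation of the parameters\<close>

lemma eventually_tangent_step_in:
  assumes reg: "shear_regular (\<alpha>, \<beta>, i) (fst s)" and U: "open U" "tangent_step (\<alpha>, \<beta>, i) s \<in> U"
  shows "\<forall>\<^sub>F (a, b, t) in nhds (\<alpha>, \<beta>, s). shear_regular (a, b, i) (fst t) \<and> tangent_step (a, b, i) t \<in> U"
proof -
  \<comment> \<open>the tent slope is locally constant near the regular point \<open>g (\<alpha>, \<beta>, s)\<close>, which makes
      the tangent step continuous there\<close>
  define g :: "real \<times> real \<times> tangent_state \<Rightarrow> real"
    where "g x = (if i = 1 then snd (fst (snd (snd x))) else fst (fst (snd (snd x)))) - fst x" for x
  define T where "T x = tangent_step (fst x, fst (snd x), i) (snd (snd x))" for x
  have reg': "tent_regular (g (\<alpha>, \<beta>, s))"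
    using reg by (cases "i = 1") (simp_all add: g_def shear_regular_eq_if)
  have g: "isCont g (\<alpha>, \<beta>, s)"
    unfolding g_def by (cases "i = 1") (simp_all add: continuous_intros)
  then have "(g \<longlongrightarrow> g (\<alpha>, \<beta>, s)) (nhds (\<alpha>, \<beta>, s))"
    by (simp add: isCont_def tendsto_at_iff_tendsto_nhds)
  with eventually_mono[OF tent_regular_eventually[OF reg']]
  have ev_regular: "\<forall>\<^sub>F x in nhds (\<alpha>, \<beta>, s). tent_regular (g x)"
    by (rule eventually_compose_filterlim) simp
  have "isCont T (\<alpha>, \<beta>, s)"
  proof -
    have F0_g: "isCont (\<lambda>x. F0 (g x)) (\<alpha>, \<beta>, s)"
      using g isCont_F0 by (rule isCont_o2)
    have slope_g: "isCont (\<lambda>x. tent_slope (g x)) (\<alpha>, \<beta>, s)"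
      using g isCont_tent_slope[OF reg'] by (rule isCont_o2)
    show ?thesis
    proof (cases "i = 1")
      case True
      then have "T = (\<lambda>x. ((fst (fst (snd (snd x))) + fst (snd x) * F0 (g x), snd (fst (snd (snd x)))),
          (fst (snd (snd (snd x))) + fst (snd x) * tent_slope (g x) * snd (snd (snd (snd x))),
           snd (snd (snd (snd x))))))"
        by (simp add: fun_eq_iff T_def g_def tangent_step_def shear_eq_if shear_tangent_eq_if)
      then show ?thesis by (simp only:) (intro continuous_Pair continuous_add continuous_mult
          continuous_fst continuous_snd continuous_ident F0_g slope_g)
    next
      case False
      then have "T = (\<lambda>x. ((fst (fst (snd (snd x))), snd (fst (snd (snd x))) + fst (snd x) * F0 (g x)),
          (fst (snd (snd (snd x))),
           snd (snd (snd (snd x))) + fst (snd x) * tent_slope (g x) * fst (snd (snd (snd x))))))"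
        by (simp add: fun_eq_iff T_def g_def tangent_step_def shear_eq_if shear_tangent_eq_if)
      then show ?thesis by (simp only:) (intro continuous_Pair continuous_add continuous_mult
          continuous_fst continuous_snd continuous_ident F0_g slope_g)
    qed
  qed
  then have "(T \<longlongrightarrow> T (\<alpha>, \<beta>, s)) (nhds (\<alpha>, \<beta>, s))"
    by (simp add: isCont_def tendsto_at_iff_tendsto_nhds)
  moreover have "T (\<alpha>, \<beta>, s) \<in> U" using U(2) by (simp add: T_def)
  ultimately have "\<forall>\<^sub>F x in nhds (\<alpha>, \<beta>, s). T x \<in> U"
    using U(1) topological_tendstoD by blast
  with ev_regular show ?thesis
    by eventually_elim (auto simp: T_def g_def shear_regular_eq_if)
qed

definition param_close :: "real \<Rightarrow> shear_param \<Rightarrow> shear_param \<Rightarrow> bool" where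
  "param_close \<rho> q p \<longleftrightarrow>
     \<bar>fst q - fst p\<bar> < \<rho> \<and> \<bar>fst (snd q) - fst (snd p)\<bar> < \<rho> \<and> snd (snd q) = snd (snd p)"

lemma dist_Pair_le: "dist (a, b) (c, d) \<le> dist a c + dist b d"
  using sqrt_sum_squares_le_sum_abs[of "dist a c" "dist b d"] by (simp add: dist_Pair_Pair)

lemma tangent_step_robust:
  assumes "shear_regular p (fst s0)" "open U" "tangent_step p s0 \<in> U"
  shows "\<exists>\<rho>>0. \<forall>q s. param_close \<rho> q p \<longrightarrow> dist s s0 < \<rho> \<longrightarrow>
    shear_regular q (fst s) \<and> tangent_step q s \<in> U"
proof -
  obtain \<alpha> \<beta> i where p: "p = (\<alpha>, \<beta>, i)" by (cases p) auto
  obtain d where "d > 0" and d: "\<And>a b s. dist (a, b, s) (\<alpha>, \<beta>, s0) < d \<Longrightarrow>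
      shear_regular (a, b, i) (fst s) \<and> tangent_step (a, b, i) s \<in> U"
    using eventually_tangent_step_in[OF assms[unfolded p]] by (force simp: eventually_nhds_metric)
  have "shear_regular q (fst s) \<and> tangent_step q s \<in> U"
    if "param_close (d / 3) q p" "dist s s0 < d / 3" for q s
  proof -
    obtain a b j where q: "q = (a, b, j)" by (cases q) auto
    have "dist (a, b, s) (\<alpha>, \<beta>, s0) \<le> dist a \<alpha> + (dist b \<beta> + dist s s0)"
      by (meson add_left_mono dist_Pair_le order_trans)
    also have "\<dots> < d" using that by (simp add: q p param_close_def dist_real_def)
    finally show ?thesis using d that(1) by (simp add: q p param_close_def)
  qed
  then show ?thesis using \<open>d > 0\<close> by (intro exI[of _ "d / 3"]) auto
qed

lemma tangent_run_robust:
  assumes "steps_regular ps s0" "open U" "tangent_run ps s0 \<in> U"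
  shows "\<exists>\<rho>>0. \<forall>qs s. list_all2 (param_close \<rho>) qs ps \<longrightarrow> dist s s0 < \<rho> \<longrightarrow>
    steps_regular qs s \<and> tangent_run qs s \<in> U"
  using assms
proof (induction ps arbitrary: s0)
  case Nil
  then have "open U" "s0 \<in> U" by simp_all
  then obtain \<rho> where "\<rho> > 0" "ball s0 \<rho> \<subseteq> U" by (rule openE)
  then show ?case by (intro exI[of _ \<rho>]) (auto simp: dist_commute)
next
  case (Cons p ps)
  then have "steps_regular ps (tangent_step p s0)" "tangent_run ps (tangent_step p s0) \<in> U"
    by simp_all
  from Cons.IH[OF this(1) Cons.prems(2) this(2)]
  obtain \<rho>1 where "\<rho>1 > 0" and \<rho>1: "\<forall>qs s. list_all2 (param_close \<rho>1) qs ps \<longrightarrow>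
      dist s (tangent_step p s0) < \<rho>1 \<longrightarrow> steps_regular qs s \<and> tangent_run qs s \<in> U"
    by blast
  from Cons.prems obtain \<rho>2 where "\<rho>2 > 0" and \<rho>2: "\<forall>q s. param_close \<rho>2 q p \<longrightarrow> dist s s0 < \<rho>2 \<longrightarrow>
      shear_regular q (fst s) \<and> tangent_step q s \<in> ball (tangent_step p s0) \<rho>1"
    using tangent_step_robust[of p s0 "ball (tangent_step p s0) \<rho>1"] \<open>\<rho>1 > 0\<close> by auto
  have "steps_regular qs s \<and> tangent_run qs s \<in> U"
    if "list_all2 (param_close (min \<rho>1 \<rho>2)) qs (p # ps)" "dist s s0 < min \<rho>1 \<rho>2" for qs s
  proof -
    from that(1) obtain q qs' where qs: "qs = q # qs'" and "param_close (min \<rho>1 \<rho>2) q p"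
      and "list_all2 (param_close (min \<rho>1 \<rho>2)) qs' ps"
      by (cases qs) auto
    then have "param_close \<rho>2 q p" and qs': "list_all2 (param_close \<rho>1) qs' ps"
      by (auto simp: param_close_def elim: list_all2_mono)
    with \<rho>2[rule_format, of q s] that(2)
    have "shear_regular q (fst s)" "dist (tangent_step q s) (tangent_step p s0) < \<rho>1"
      by (simp_all add: dist_commute)
    with \<rho>1[rule_format, OF qs'] show ?thesis by (simp add: qs)
  qed
  then show ?case using \<open>\<rho>1 > 0\<close> \<open>\<rho>2 > 0\<close> by (intro exI[of _ "min \<rho>1 \<rho>2"]) auto
qed

definition admissible_param :: "shear_param \<Rightarrow> bool" where
  "admissible_param p \<longleftrightarrow> fst p \<in> {0..1} \<and> fst (snd p) \<in> {0..1} \<and> snd (snd p) \<in> {1, 2}"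

lemma prob_space_M1: "prob_space M1"
  unfolding M1_def
  by (intro prob_space_pair prob_space_uniform_measure prob_space_uniform_count_measure) auto

lemma emeasure_uniform_unit_interval_pos:
  fixes c r :: real
  assumes "c \<in> {0..1}" "r > 0"
  shows "emeasure (uniform_measure lborel {0..1}) {c - r <..< c + r} > 0"
proof -
  have "0 < emeasure lborel {max 0 (c - r) <..< min 1 (c + r)}"
    using assms by auto
  also have "\<dots> \<le> emeasure lborel ({0..1} \<inter> {c - r <..< c + r})"
    by (rule emeasure_mono) auto
  finally show ?thesis by (simp add: divide_ennreal_def)
qed

lemma param_close_set_M1:
  assumes "admissible_param p" "\<rho> > 0"
  shows "{q. param_close \<rho> q p} \<in> sets M1" and "emeasure M1 {q. param_close \<rho> q p} > 0"
proof -
  obtain \<alpha> \<beta> i where p: "p = (\<alpha>, \<beta>, i)" by (cases p) auto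
  let ?U = "uniform_measure lborel {0..1::real}" and ?C = "uniform_count_measure {1, 2::nat}"
  interpret C: prob_space ?C by (rule prob_space_uniform_count_measure) auto
  interpret UC: prob_space "?U \<Otimes>\<^sub>M ?C"
    by (intro prob_space_pair prob_space_uniform_measure prob_space_uniform_count_measure) auto
  have i: "i \<in> {1, 2}" and box: "{q. param_close \<rho> q p} =
      {\<alpha> - \<rho> <..< \<alpha> + \<rho>} \<times> {\<beta> - \<rho> <..< \<beta> + \<rho>} \<times> {i}"
    using assms by (auto simp: p param_close_def admissible_param_def abs_less_iff)
  have i_sets: "{i} \<in> sets ?C" using i by (simp add: sets_uniform_count_measure)
  show "{q. param_close \<rho> q p} \<in> sets M1"
    unfolding box M1_def using i_sets by (intro pair_measureI) auto
  have "emeasure (?U \<Otimes>\<^sub>M ?C) ({\<beta> - \<rho> <..< \<beta> + \<rho>} \<times> {i}) =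
      emeasure ?U {\<beta> - \<rho> <..< \<beta> + \<rho>} * emeasure ?C {i}"
    by (rule C.emeasure_pair_measure_Times) (use i_sets in auto)
  moreover have "emeasure M1 {q. param_close \<rho> q p} =
      emeasure ?U {\<alpha> - \<rho> <..< \<alpha> + \<rho>} * emeasure (?U \<Otimes>\<^sub>M ?C) ({\<beta> - \<rho> <..< \<beta> + \<rho>} \<times> {i})"
    unfolding box M1_def by (rule UC.emeasure_pair_measure_Times) (use i_sets in auto)
  moreover have "emeasure ?C {i} > 0"
    using i by (subst emeasure_uniform_count_measure) (auto simp: ennreal_inverse_positive)
  ultimately show "emeasure M1 {q. param_close \<rho> q p} > 0"
    using assms emeasure_uniform_unit_interval_pos
    by (simp add: p admissible_param_def ennreal_zero_less_mult_iff)
qed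

lemma prob_space_Mseq: "prob_space Mseq"
  unfolding Mseq_def by (intro prob_space_PiM prob_space_M1)

lemma measure_hit_event_pos:
  assumes ps: "list_all admissible_param ps" and reg: "steps_regular ps (x, u)"
    and S: "open S" "tangent_run ps (x, u) \<in> S"
  shows "measure Mseq (hit_event (length ps) x u S) > 0"
proof -
  obtain \<rho> where "\<rho> > 0" and \<rho>: "\<forall>qs s. list_all2 (param_close \<rho>) qs ps \<longrightarrow> dist s (x, u) < \<rho> \<longrightarrow>
      steps_regular qs s \<and> tangent_run qs s \<in> S"
    using tangent_run_robust[OF reg S] by blast
  define n where "n = length ps"
  define B where "B k = {q. param_close \<rho> q (ps ! k)}" for k
  define C where "C = prod_emb UNIV (\<lambda>_. M1) {..<n} (\<Pi>\<^sub>E k\<in>{..<n}. B k)"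
  interpret P: product_prob_space "\<lambda>_::nat. M1" UNIV
    by (rule product_prob_spaceI) (rule prob_space_M1)
  interpret Mseq: prob_space Mseq by (rule prob_space_Mseq)
  have B: "B k \<in> sets M1" "emeasure M1 (B k) > 0" if "k < n" for k
    using param_close_set_M1[of "ps ! k" \<rho>] ps that \<open>\<rho> > 0\<close> by (auto simp: B_def n_def list_all_length)
  have "0 < (\<Prod>k<n. emeasure M1 (B k))"
    using B by (auto simp: zero_less_iff_neq_zero prod_zero_iff)
  also have "\<dots> = emeasure Mseq C"
    unfolding Mseq_def C_def by (rule P.emeasure_PiM_emb[symmetric]) (auto intro: B)
  finally have "0 < measure Mseq C" by (simp add: Mseq.emeasure_eq_measure)
  also have "measure Mseq C \<le> measure Mseq (hit_event n x u S)"
  proof (rule Mseq.finite_measure_mono)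
    show "hit_event n x u S \<in> sets Mseq" using S(1) by (rule sets_hit_event)
    show "C \<subseteq> hit_event n x u S"
    proof
      fix \<omega> assume "\<omega> \<in> C"
      then have \<omega>: "\<omega> \<in> space Mseq" "\<And>k. k < n \<Longrightarrow> \<omega> k \<in> B k"
        by (auto simp: C_def prod_emb_def Mseq_def space_PiM)
      then have "list_all2 (param_close \<rho>) (map \<omega> [0..<n]) ps"
        by (auto simp: list_all2_conv_all_nth n_def B_def)
      with \<rho>[rule_format, of _ "(x, u)"] \<open>\<rho> > 0\<close> have "steps_regular (map \<omega> [0..<n]) (x, u)"
        and "tangent_run (map \<omega> [0..<n]) (x, u) \<in> S" by auto
      with \<omega>(1) phi_has_derivative_tangent_run show "\<omega> \<in> hit_event n x u S"
        unfolding hit_event_def by fastforce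
    qed
  qed
  finally show ?thesis by (simp add: n_def)
qed

section \<open>Controllability\<close>

definition reachable :: "tangent_state \<Rightarrow> tangent_state \<Rightarrow> bool" where
  "reachable s s' \<longleftrightarrow> (\<exists>ps. list_all admissible_param ps \<and> steps_regular ps s \<and> tangent_run ps s = s')"

lemma reachable_refl: "reachable s s"
  unfolding reachable_def by (intro exI[of _ "[]"]) simp

lemma reachable_trans: "reachable s1 s2 \<Longrightarrow> reachable s2 s3 \<Longrightarrow> reachable s1 s3"
  unfolding reachable_def
proof (elim exE conjE)
  fix ps qs
  assume "list_all admissible_param ps" "steps_regular ps s1" "tangent_run ps s1 = s2"
    and "list_all admissible_param qs" "steps_regular qs s2" "tangent_run qs s2 = s3"
  then show "\<exists>ps. list_all admissible_param ps \<and> steps_regular ps s1 \<and> tangent_run ps s1 = s3"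
    by (intro exI[of _ "ps @ qs"]) (simp add: steps_regular_append tangent_run_append)
qed

definition swap_state :: "tangent_state \<Rightarrow> tangent_state" where
  "swap_state s = (prod.swap (fst s), prod.swap (snd s))"

definition swap_param :: "shear_param \<Rightarrow> shear_param" where
  "swap_param p = (fst p, fst (snd p), if snd (snd p) = 1 then 2 else 1)"

lemma swap_steps:
  "steps_regular (map swap_param ps) (swap_state s) = steps_regular ps s \<and>
   tangent_run (map swap_param ps) (swap_state s) = swap_state (tangent_run ps s)"
proof (induction ps arbitrary: s)
  case Nil
  show ?case by simp
next
  case (Cons p ps)
  have "tangent_step (swap_param p) (swap_state s) = swap_state (tangent_step p s)"
    and "shear_regular (swap_param p) (fst (swap_state s)) = shear_regular p (fst s)"
    by (simp_all add: swap_param_def swap_state_def tangent_step_def shear_eq_if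
        shear_tangent_eq_if shear_regular_eq_if)
  with Cons.IH show ?case by simp
qed

lemma reachable_swap: "reachable s s' \<Longrightarrow> reachable (swap_state s) (swap_state s')"
  unfolding reachable_def
proof (elim exE conjE)
  fix ps assume "list_all admissible_param ps" "steps_regular ps s" "tangent_run ps s = s'"
  moreover have "admissible_param p \<Longrightarrow> admissible_param (swap_param p)" for p
    by (simp add: admissible_param_def swap_param_def)
  ultimately show "\<exists>qs. list_all admissible_param qs \<and> steps_regular qs (swap_state s) \<and>
      tangent_run qs (swap_state s) = swap_state s'"
    by (intro exI[of _ "map swap_param ps"])
      (auto simp: swap_steps list.pred_map elim: list.pred_mono_strong)
qed

lemma reachable_horizontal_shear:
  assumes "\<beta> \<in> {0..1}" "tent_regular t"
  shows "reachable ((a, b), v) ((a + \<beta> * F0 t, b), (fst v + \<beta> * tent_slope t * snd v, snd v))"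
proof -
  \<comment> \<open>this phase makes the shear at height \<open>b\<close> read the profile at \<open>t\<close>\<close>
  define \<alpha> where "\<alpha> = frac (b - t)"
  have "frac (b - \<alpha>) = frac t"
    by (simp add: \<alpha>_def frac_def algebra_simps)
  then show ?thesis
    using assms tent_regular_frac_cong[of "b - \<alpha>" t] frac_ge_0[of "b - t"] frac_lt_1[of "b - t"]
    unfolding reachable_def
    by (intro exI[of _ "[(\<alpha>, \<beta>, 1)]"])
      (auto simp: admissible_param_def \<alpha>_def[symmetric] tangent_step_def shear_eq_if
        shear_tangent_eq_if shear_regular_eq_if)
qed

lemma reachable_horizontal_slope:
  assumes "\<bar>\<sigma>\<bar> \<le> 8"
  shows "\<exists>d. reachable ((a, b), v) ((a + d, b), (fst v + \<sigma> * snd v, snd v))"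
proof (cases "\<sigma> \<ge> 0")
  case True
  with assms reachable_horizontal_shear[of "\<sigma> / 8" "15/32" a b v] tent_at_15_32(1,2) show ?thesis
    by (intro exI[of _ "\<sigma> / 8 * F0 (15/32)"]) auto
next
  case False
  with assms reachable_horizontal_shear[of "- \<sigma> / 8" "17/32" a b v] tent_at_17_32(1,2) show ?thesis
    by (intro exI[of _ "- \<sigma> / 8 * F0 (17/32)"]) auto
qed

lemma reachable_horizontal_any_slope: "\<exists>z'. reachable (z, v) (z', (fst v + \<sigma> * snd v, snd v))"
proof -
  define k :: nat where "k = nat \<lceil>\<bar>\<sigma>\<bar> / 8\<rceil> + 1"
  define \<tau> where "\<tau> = \<sigma> / real k"
  have "k > 0" and "\<bar>\<sigma>\<bar> / 8 \<le> real k"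
    unfolding k_def by linarith+
  then have small: "\<bar>\<tau>\<bar> \<le> 8" by (simp add: \<tau>_def abs_divide field_simps)
  have "\<exists>z'. reachable (z, v) (z', (fst v + real m * \<tau> * snd v, snd v))" for m
  proof (induction m)
    case 0
    show ?case by (intro exI[of _ z]) (simp add: reachable_refl)
  next
    case (Suc m)
    then obtain z' where "reachable (z, v) (z', (fst v + real m * \<tau> * snd v, snd v))" ..
    moreover obtain d where "reachable (z', (fst v + real m * \<tau> * snd v, snd v))
        ((fst z' + d, snd z'), (fst v + real m * \<tau> * snd v + \<tau> * snd v, snd v))"
      using reachable_horizontal_slope[OF small, of "fst z'" "snd z'"
          "(fst v + real m * \<tau> * snd v, snd v)"] by auto
    ultimately have "reachable (z, v)
        ((fst z' + d, snd z'), (fst v + real m * \<tau> * snd v + \<tau> * snd v, snd v))"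
      by (rule reachable_trans)
    then show ?case by (intro exI[of _ "(fst z' + d, snd z')"]) (simp add: algebra_simps)
  qed
  from this[of k] \<open>k > 0\<close> show ?thesis by (simp add: \<tau>_def)
qed

lemma reachable_horizontal_translate: "\<exists>k::int. reachable ((a, b), v) ((y - of_int k, b), v)"
proof -
  \<comment> \<open>two shears reading the profile where its slope is \<open>8\<close> and \<open>-8\<close> and its value \<open>3/4\<close>:
      their effects on the tangent vector cancel, those on the position add up\<close>
  define \<beta> where "\<beta> = 2 / 3 * frac (y - a)"
  have \<beta>: "\<beta> \<in> {0..1}" using frac_ge_0[of "y - a"] frac_lt_1[of "y - a"] by (simp add: \<beta>_def)
  have "reachable ((a, b), v) ((a + \<beta> * (3/4), b), (fst v + \<beta> * 8 * snd v, snd v))"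
    using reachable_horizontal_shear[OF \<beta>, of "15/32" a b v] tent_at_15_32 by simp
  moreover have "reachable ((a + \<beta> * (3/4), b), (fst v + \<beta> * 8 * snd v, snd v))
      ((a + \<beta> * (3/4) + \<beta> * (3/4), b), (fst v + \<beta> * 8 * snd v + \<beta> * (-8) * snd v, snd v))"
    using reachable_horizontal_shear[OF \<beta>, of "17/32" "a + \<beta> * (3/4)" b
        "(fst v + \<beta> * 8 * snd v, snd v)"] tent_at_17_32 by simp
  moreover have "a + \<beta> * (3/4) + \<beta> * (3/4) = y - of_int \<lfloor>y - a\<rfloor>"
    by (simp add: \<beta>_def frac_def field_simps)
  ultimately have "reachable ((a, b), v) ((y - of_int \<lfloor>y - a\<rfloor>, b), v)"
    by (auto intro: reachable_trans)
  then show ?thesis ..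
qed

lemma reachable_vertical_any_slope: "\<exists>z'. reachable (z, v) (z', (fst v, snd v + \<sigma> * fst v))"
proof -
  obtain z' where "reachable (swap_state (z, v)) (z', (snd v + \<sigma> * fst v, fst v))"
    using reachable_horizontal_any_slope[of "prod.swap z" "prod.swap v" \<sigma>]
    by (auto simp: swap_state_def)
  from reachable_swap[OF this] have "reachable (z, v) (prod.swap z', (fst v, snd v + \<sigma> * fst v))"
    by (simp add: swap_state_def)
  then show ?thesis ..
qed

lemma reachable_vertical_translate: "\<exists>k::int. reachable ((a, b), v) ((a, y - of_int k), v)"
proof -
  obtain k :: int where "reachable (swap_state ((a, b), v)) ((y - of_int k, a), prod.swap v)"
    using reachable_horizontal_translate[of b a "prod.swap v" y] by (auto simp: swap_state_def)
  from reachable_swap[OF this] show ?thesis by (auto simp: swap_state_def)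
qed

lemma reachable_direction:
  assumes u: "u \<noteq> 0" and w: "fst w \<noteq> 0" "snd w \<noteq> 0"
  shows "\<exists>z c. c \<noteq> 0 \<and> reachable (x, u) (z, c *\<^sub>R w)"
proof -
  obtain z v where xv: "reachable (x, u) (z, v)" and v: "fst v \<noteq> 0" "snd v \<noteq> 0"
  proof (cases "fst u = 0")
    case True
    with u have "snd u \<noteq> 0" by (auto simp: prod_eq_iff)
    obtain z where "reachable (x, u) (z, (fst u + 1 * snd u, snd u))"
      using reachable_horizontal_any_slope by blast
    with True \<open>snd u \<noteq> 0\<close> show ?thesis using that[of z "(snd u, snd u)"] by simp
  next
    case False
    show ?thesis
    proof (cases "snd u = 0")
      case True
      obtain z where "reachable (x, u) (z, (fst u, snd u + 1 * fst u))"
        using reachable_vertical_any_slope by blast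
      with True False show ?thesis using that[of z "(fst u, fst u)"] by simp
    next
      case False
      with \<open>fst u \<noteq> 0\<close> show ?thesis by (intro that[OF reachable_refl])
    qed
  qed
  obtain z' where
    zv: "reachable (z, v) (z', (fst v + (fst w / snd w - fst v / snd v) * snd v, snd v))"
    using reachable_horizontal_any_slope by blast
  have "(fst v + (fst w / snd w - fst v / snd v) * snd v, snd v) = (snd v / snd w) *\<^sub>R w"
    using v w by (simp add: prod_eq_iff field_simps)
  with reachable_trans[OF xv zv] have "reachable (x, u) (z', (snd v / snd w) *\<^sub>R w)"
    by simp
  moreover have "snd v / snd w \<noteq> 0" using v w by simp
  ultimately show ?thesis by blast
qed

lemma reachable_lifted_target:
  assumes "u \<noteq> 0" "fst w \<noteq> 0" "snd w \<noteq> 0"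
  shows "\<exists>(k1::int) (k2::int) c. c \<noteq> 0 \<and> reachable (x, u) ((fst y + k1, snd y + k2), c *\<^sub>R w)"
proof -
  obtain z c where c: "c \<noteq> 0" and "reachable (x, u) (z, c *\<^sub>R w)"
    using reachable_direction[OF assms] by blast
  moreover obtain k1 :: int where
    "reachable ((fst z, snd z), c *\<^sub>R w) ((fst y - k1, snd z), c *\<^sub>R w)"
    using reachable_horizontal_translate by blast
  moreover obtain k2 :: int where
    "reachable ((fst y - k1, snd z), c *\<^sub>R w) ((fst y - k1, snd y - k2), c *\<^sub>R w)"
    using reachable_vertical_translate by blast
  ultimately have "reachable (x, u) ((fst y + of_int (- k1), snd y + of_int (- k2)), c *\<^sub>R w)"
    by (auto intro: reachable_trans)
  with c show ?thesis by blast
qed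

lemma open_generic_direction:
  fixes y :: "'a::metric_space" and w :: "real \<times> real"
  assumes "open S" "(y, w) \<in> S"
  shows "\<exists>w'. (y, w') \<in> S \<and> fst w' \<noteq> 0 \<and> snd w' \<noteq> 0"
proof -
  obtain e where "e > 0" and e: "ball (y, w) e \<subseteq> S" using openE[OF assms] .
  define w' where "w' = (if fst w = 0 then e / 4 else fst w, if snd w = 0 then e / 4 else snd w)"
  have "dist (y, w') (y, w) \<le> dist (fst w') (fst w) + dist (snd w') (snd w)"
    using dist_Pair_le[of y w' y w] dist_Pair_le[of "fst w'" "snd w'" "fst w" "snd w"] by simp
  also have "\<dots> < e" using \<open>e > 0\<close> by (simp add: w'_def dist_real_def)
  finally have "(y, w') \<in> S" using e by (auto simp: dist_commute)
  moreover have "fst w' \<noteq> 0" "snd w' \<noteq> 0" using \<open>e > 0\<close> by (simp_all add: w'_def)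
  ultimately show ?thesis by blast
qed

theorem lemmaA4:
  fixes x u :: "real \<times> real" and S :: "((real \<times> real) \<times> (real \<times> real)) set"
  assumes "u \<noteq> 0" and "proj_open S" and "S \<noteq> {}"
  shows "\<exists>n. hit_event n x u S \<in> sets Mseq \<and> measure Mseq (hit_event n x u S) > 0"
proof -
  have "open S" and saturated: "\<And>y w (k1::int) (k2::int) (c::real). (y, w) \<in> S \<Longrightarrow> c \<noteq> 0 \<Longrightarrow>
      ((fst y + of_int k1, snd y + of_int k2), c *\<^sub>R w) \<in> S"
    using assms(2) unfolding proj_open_def by blast+
  from assms(3) obtain y w where "(y, w) \<in> S" by auto
  with open_generic_direction[OF \<open>open S\<close>]
  obtain w where "(y, w) \<in> S" and w: "fst w \<noteq> 0" "snd w \<noteq> 0" by blast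
  then obtain k1 k2 :: int and c ps where c: "c \<noteq> 0" and ps: "list_all admissible_param ps"
    "steps_regular ps (x, u)" "tangent_run ps (x, u) = ((fst y + k1, snd y + k2), c *\<^sub>R w)"
    using reachable_lifted_target[OF assms(1) w, of x y] unfolding reachable_def by blast
  with saturated[OF \<open>(y, w) \<in> S\<close> c] have "tangent_run ps (x, u) \<in> S" by simp
  with ps \<open>open S\<close> have "measure Mseq (hit_event (length ps) x u S) > 0"
    by (intro measure_hit_event_pos)
  with sets_hit_event[OF \<open>open S\<close>] show ?thesis by blast
qed

end
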